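(* Fix a state $s$. Let $\pi^t_s\in\Delta(\mathscr{A})\cap\operatorname{rint}\operatorname{dom}h$, let $\widehat Q^t_s,\widehat Q^{t-1}_s\in\mathbb{R}^{\mathscr{A}}$ be arbitrary vectors and $\eta^{t-1},\eta^t>0$. Let $$\tilde\pi_s=\arg\min_{\pi_s\in\Delta(\mathscr{A})}-\langle\widehat Q^t_s-\widehat Q^{t-1}_s,\pi_s\rangle+\tfrac1{\eta^{t-1}}D_h(\pi_s,\pi^t_s),$$ and define the Lazy PMD(+correction) objective $F_{\mathrm{lzc}}(\pi_s)=-\langle\widehat Q^t_s,\pi_s\rangle+\frac1{\eta^t}D_h(\pi_s,\tilde\pi_s)$ and the Lazy PMD(+momentum) objective $F_{\mathrm{mom}}(\pi_s)=-\langle\widehat Q^t_s+\frac{\eta^{t-1}}{\eta^t}(\widehat Q^t_s-\widehat Q^{t-1}_s),\pi_s\rangle+\frac1{\eta^t}D_h(\pi_s,\pi^t_s)$. Then for every $\pi_s\in\Delta(\mathscr{A})\cap\operatorname{dom}h$, $$F_{\mathrm{lzc}}(\pi_s)-F_{\mathrm{lzc}}(\tilde\pi_s)\ \le\ F_{\mathrm{mom}}(\pi_s)-F_{\mathrm{mom}}(\tilde\pi_s).$$ (This is the sense in which the solutions of Lazy PMD(+momentum) subsume those of Lazy PMD(+correction).)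
   Context: $\mathscr{A}$ is a finite action set and $\langle\cdot,\cdot\rangle$ the dot product on $\mathbb{R}^{\mathscr{A}}$. The mirror map $h:\mathbb{R}^{\mathscr{A}}\to\mathbb{R}\cup\{+\infty\}$ is of Legendre type (strictly convex and essentially smooth on $\operatorname{rint}\operatorname{dom}h$) with $\Delta(\mathscr{A})\cap\operatorname{rint}\operatorname{dom}h\neq\emptyset$; its Bregman divergence is $D_h(x,y)=h(x)-h(y)-\langle\nabla h(y),x-y\rangle$ for $x\in\operatorname{dom}h$, $y\in\operatorname{rint}\operatorname{dom}h$. For $q\in\mathbb{R}^{\mathscr{A}}$, $y\in\Delta(\mathscr{A})\cap\operatorname{rint}\operatorname{dom}h$ and $\eta>0$, the problem $\arg\min_{\pi\in\Delta(\mathscr{A})}-\langle q,\pi\rangle+\frac1\eta D_h(\pi,y)$ has a unique minimizer, lying in $\operatorname{rint}\operatorname{dom}h$. *)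

theory Defs
  imports "HOL-Analysis.Analysis"
begin

text \<open>Vectors in R^A are modelled as real^'a with 'a a finite type (the action set).
An extended-real-valued mirror map h : R^A -> R \<union> {+\<infinity>} is modelled by its
effective domain C = dom h together with its (real) values h on C.\<close>

definition prob_simplex :: "(real^'a::finite) set" where
  "prob_simplex = {p. (\<forall>a. 0 \<le> p $ a) \<and> (\<Sum>a\<in>UNIV. p $ a) = 1}"

definition strictly_convex_on :: "(real^'a::finite) set \<Rightarrow> (real^'a \<Rightarrow> real) \<Rightarrow> bool" where
  "strictly_convex_on S f \<longleftrightarrow>
     (\<forall>x\<in>S. \<forall>y\<in>S. \<forall>t::real. x \<noteq> y \<and> 0 < t \<and> t < 1 \<longrightarrow>
        f ((1 - t) *\<^sub>R x + t *\<^sub>R y) < (1 - t) * f x + t * f y)"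

text \<open>Gradient of h at y (meaningful where h is differentiable at y).\<close>
definition grad :: "(real^'a::finite \<Rightarrow> real) \<Rightarrow> real^'a \<Rightarrow> real^'a" where
  "grad h y = (THE g. GDERIV h y :> g)"

text \<open>Legendre type (Rockafellar, Sec. 26): h is a closed proper convex function which
is essentially smooth (int dom h nonempty, h differentiable on int dom h, and the gradient
norm blows up along sequences approaching the boundary of dom h) and strictly convex on
int dom h.\<close>
definition legendre :: "(real^'a::finite \<Rightarrow> real) \<Rightarrow> (real^'a) set \<Rightarrow> bool" where
  "legendre h C \<longleftrightarrow>
     convex C \<and> convex_on C h \<and>
     closed {(x, t). x \<in> C \<and> h x \<le> t} \<and>
     interior C \<noteq> {} \<and>
     (\<forall>y\<in>interior C. h differentiable (at y)) \<and>
     (\<forall>x z. (\<forall>k. x k \<in> interior C) \<longrightarrow> x \<longlonglongrightarrow> z \<longrightarrow> z \<in> frontier C \<longrightarrow>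
        filterlim (\<lambda>k. norm (grad h (x k))) at_top sequentially) \<and>
     strictly_convex_on (interior C) h"

definition bregman :: "(real^'a::finite \<Rightarrow> real) \<Rightarrow> real^'a \<Rightarrow> real^'a \<Rightarrow> real" where
  "bregman h x y = h x - h y - inner (grad h y) (x - y)"

end

theory Submission
  imports Defs
begin

text \<open>Write \<open>g = Qt - Qprev\<close>. Since the minimiser \<open>\<pi>tilde\<close> of the correction step lies in the
interior of \<open>dom h\<close>, first-order optimality over the simplex gives the variational inequality
\<open>\<eta>prev \<langle>g, p - \<pi>tilde\<rangle> \<le> \<langle>\<nabla>h \<pi>tilde - \<nabla>h \<pi>t, p - \<pi>tilde\<rangle>\<close>. The three-point identity of
Bregman divergences turns its right-hand side into
\<open>D(p, \<pi>t) - D(\<pi>tilde, \<pi>t) - D(p, \<pi>tilde)\<close>, and the resulting bound on \<open>D(p, \<pi>tilde)\<close> is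
exactly the claimed comparison of the two objectives.\<close>

lemma convex_prob_simplex: "convex (prob_simplex :: (real^'a::finite) set)"
  unfolding prob_simplex_def convex_def
  by (auto simp: sum.distrib sum_distrib_left[symmetric])

lemma legendre_differentiable_rel_interior:
  assumes "legendre h C" "x \<in> rel_interior C"
  shows "h differentiable (at x)"
proof -
  have "rel_interior C = interior C"
    using assms(1) unfolding legendre_def by (simp add: rel_interior_nonempty_interior)
  then show ?thesis
    using assms unfolding legendre_def by auto
qed

lemma gderiv_unique:
  assumes "GDERIV f x :> D" "GDERIV f x :> E"
  shows "D = E"
proof -
  have "(\<lambda>v. inner v D) = (\<lambda>v. inner v E)"
    using assms unfolding gderiv_def by (rule has_derivative_unique)
  then have "inner (D - E) D = inner (D - E) E"
    by (rule fun_cong)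
  then have "inner (D - E) (D - E) = 0"
    by (simp add: inner_diff_right)
  then show ?thesis by simp
qed

lemma gderiv_grad:
  fixes h :: "real^'a::finite \<Rightarrow> real"
  assumes "h differentiable (at y)"
  shows "GDERIV h y :> grad h y"
proof -
  obtain f' where f': "(h has_derivative f') (at y)"
    using assms differentiable_def by blast
  have "f' = (\<lambda>v. inner v (adjoint f' 1))"
    using adjoint_works[OF has_derivative_linear[OF f']] by (auto simp: fun_eq_iff)
  with f' have "GDERIV h y :> adjoint f' 1"
    unfolding gderiv_def by simp
  then show ?thesis
    unfolding grad_def by (rule theI) (rule gderiv_unique[OF _ \<open>GDERIV h y :> adjoint f' 1\<close>])
qed

lemma has_derivative_nonneg_at_min_on_convex:
  fixes f :: "'a::real_normed_vector \<Rightarrow> real"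
  assumes deriv: "(f has_derivative f') (at x)"
    and "convex S" "x \<in> S" "y \<in> S"
    and min: "\<forall>z\<in>S. f x \<le> f z"
  shows "0 \<le> f' (y - x)"
proof (rule ccontr)
  assume "\<not> 0 \<le> f' (y - x)"
  have "((\<lambda>s. x + s *\<^sub>R (y - x)) has_derivative (\<lambda>s. s *\<^sub>R (y - x))) (at 0)"
    by (auto intro!: derivative_eq_intros)
  then have "((\<lambda>s. f (x + s *\<^sub>R (y - x))) has_derivative (\<lambda>s. f' (s *\<^sub>R (y - x)))) (at 0)"
    by (rule has_derivative_compose) (simp add: deriv)
  then have "((\<lambda>s. f (x + s *\<^sub>R (y - x))) has_real_derivative f' (y - x)) (at 0)"
    unfolding has_field_derivative_def
    by (simp add: linear_scale[OF has_derivative_linear[OF deriv]] mult_commute_abs)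
  from DERIV_neg_dec_right[OF this] \<open>\<not> 0 \<le> f' (y - x)\<close>
  obtain e where "e > 0" and dec: "\<And>s. 0 < s \<Longrightarrow> s < e \<Longrightarrow> f (x + s *\<^sub>R (y - x)) < f x"
    by force
  define s where "s = min (e / 2) 1"
  have "0 < s" "s < e" "s \<le> 1"
    using \<open>e > 0\<close> unfolding s_def by auto
  have "x + s *\<^sub>R (y - x) = (1 - s) *\<^sub>R x + s *\<^sub>R y"
    by (simp add: algebra_simps)
  also have "\<dots> \<in> S"
    using \<open>convex S\<close> \<open>x \<in> S\<close> \<open>y \<in> S\<close> \<open>0 < s\<close> \<open>s \<le> 1\<close> unfolding convex_def by auto
  finally have "f x \<le> f (x + s *\<^sub>R (y - x))"
    using min by blast
  with dec[OF \<open>0 < s\<close> \<open>s < e\<close>] show False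
    by simp
qed

lemma bregman_three_point:
  "bregman h p x = bregman h p y - bregman h x y - inner (grad h x - grad h y) (p - x)"
  unfolding bregman_def by (simp add: inner_diff_left inner_diff_right algebra_simps)

lemma mirror_step_variational_inequality:
  fixes h :: "real^'a::finite \<Rightarrow> real"
  assumes "h differentiable (at x)" "\<eta> > 0"
    and "convex S" "x \<in> S" "p \<in> S"
    and min: "\<forall>q\<in>S. - inner g x + (1 / \<eta>) * bregman h x y \<le> - inner g q + (1 / \<eta>) * bregman h q y"
  shows "\<eta> * inner g (p - x) \<le> inner (grad h x - grad h y) (p - x)"
proof -
  have "(h has_derivative (\<lambda>v. inner v (grad h x))) (at x)"
    using gderiv_grad[OF assms(1)] unfolding gderiv_def .
  then have "((\<lambda>q. - inner g q + (1 / \<eta>) * bregman h q y) has_derivative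
      (\<lambda>v. - inner g v + (1 / \<eta>) * inner (grad h x - grad h y) v)) (at x)"
    unfolding bregman_def
    using \<open>\<eta> > 0\<close> by (auto intro!: derivative_eq_intros simp: inner_commute inner_diff_right)
  from has_derivative_nonneg_at_min_on_convex[OF this assms(3-5) min]
  have "inner g (p - x) \<le> inner (grad h x - grad h y) (p - x) / \<eta>"
    by simp
  then show ?thesis
    using \<open>\<eta> > 0\<close> by (simp add: pos_le_divide_eq mult.commute)
qed

lemma mirror_step_bregman_bound:
  fixes h :: "real^'a::finite \<Rightarrow> real"
  assumes "h differentiable (at x)" "\<eta> > 0"
    and "convex S" "x \<in> S" "p \<in> S"
    and "\<forall>q\<in>S. - inner g x + (1 / \<eta>) * bregman h x y \<le> - inner g q + (1 / \<eta>) * bregman h q y"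
  shows "bregman h p x \<le> bregman h p y - bregman h x y - \<eta> * inner g (p - x)"
  using mirror_step_variational_inequality[OF assms] bregman_three_point[of h p x y] by linarith

theorem proposition4:
  fixes h :: "real^'a::finite \<Rightarrow> real" and C :: "(real^'a) set"
    and \<pi>t \<pi>tilde Qt Qprev :: "real^'a" and \<eta>prev \<eta>t :: real
  assumes leg: "legendre h C"
    and \<pi>t: "\<pi>t \<in> prob_simplex \<inter> rel_interior C"
    and \<eta>prev: "\<eta>prev > 0" and \<eta>t: "\<eta>t > 0"
    and tilde_mem: "\<pi>tilde \<in> prob_simplex \<inter> rel_interior C"
    and tilde_min: "\<forall>p\<in>prob_simplex \<inter> C.
          - inner (Qt - Qprev) \<pi>tilde + (1 / \<eta>prev) * bregman h \<pi>tilde \<pi>t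
          \<le> - inner (Qt - Qprev) p + (1 / \<eta>prev) * bregman h p \<pi>t"
  shows "\<forall>p\<in>prob_simplex \<inter> C.
     (let Flzc = (\<lambda>q. - inner Qt q + (1 / \<eta>t) * bregman h q \<pi>tilde);
          Fmom = (\<lambda>q. - inner (Qt + (\<eta>prev / \<eta>t) *\<^sub>R (Qt - Qprev)) q
                       + (1 / \<eta>t) * bregman h q \<pi>t)
      in Flzc p - Flzc \<pi>tilde \<le> Fmom p - Fmom \<pi>tilde)"
proof
  fix p assume p: "p \<in> prob_simplex \<inter> C"
  have "convex C"
    using leg unfolding legendre_def by blast
  then have "convex (prob_simplex \<inter> C)"
    by (simp add: convex_Int convex_prob_simplex)
  moreover have "\<pi>tilde \<in> prob_simplex \<inter> C"
    using tilde_mem rel_interior_subset by blast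
  ultimately have "bregman h p \<pi>tilde
      \<le> bregman h p \<pi>t - bregman h \<pi>tilde \<pi>t - \<eta>prev * inner (Qt - Qprev) (p - \<pi>tilde)"
    using legendre_differentiable_rel_interior[OF leg] tilde_mem \<eta>prev p tilde_min
    by (intro mirror_step_bregman_bound) auto
  then have "bregman h p \<pi>tilde / \<eta>t
      \<le> (bregman h p \<pi>t - bregman h \<pi>tilde \<pi>t - \<eta>prev * inner (Qt - Qprev) (p - \<pi>tilde)) / \<eta>t"
    using \<eta>t by (simp add: divide_right_mono)
  then have "- inner Qt p + (1 / \<eta>t) * bregman h p \<pi>tilde
      - (- inner Qt \<pi>tilde + (1 / \<eta>t) * bregman h \<pi>tilde \<pi>tilde)
    \<le> - inner Qt (p - \<pi>tilde)
      + (bregman h p \<pi>t - bregman h \<pi>tilde \<pi>t - \<eta>prev * inner (Qt - Qprev) (p - \<pi>tilde)) / \<eta>t"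
    by (simp add: bregman_def inner_diff_right)
  also have "\<dots> = - inner (Qt + (\<eta>prev / \<eta>t) *\<^sub>R (Qt - Qprev)) p + (1 / \<eta>t) * bregman h p \<pi>t
      - (- inner (Qt + (\<eta>prev / \<eta>t) *\<^sub>R (Qt - Qprev)) \<pi>tilde + (1 / \<eta>t) * bregman h \<pi>tilde \<pi>t)"
    using \<eta>t by (simp add: inner_add_left inner_diff_left inner_diff_right field_simps)
  finally show "let Flzc = (\<lambda>q. - inner Qt q + (1 / \<eta>t) * bregman h q \<pi>tilde);
          Fmom = (\<lambda>q. - inner (Qt + (\<eta>prev / \<eta>t) *\<^sub>R (Qt - Qprev)) q
                       + (1 / \<eta>t) * bregman h q \<pi>t)
      in Flzc p - Flzc \<pi>tilde \<le> Fmom p - Fmom \<pi>tilde"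
    unfolding Let_def .
qed

end
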